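(* Let $G$ be a group with a left-invariant metric $d$, and for $r>0$ let $G_r$ be the subgroup of $G$ generated by the ball $B(1_G,r)=\{g: d(1_G,g)<r\}$. If $\operatorname{asdim}(G_r)\le n$ for every $r>0$ (with the restricted metric), then $\operatorname{asdim}(G,d)\le n$.
   Context: For a metric space $Z$, $\operatorname{asdim}(Z)\le n$ iff for every $r>0$ there are $D<\infty$ and families $\mathcal U_1,\dots,\mathcal U_{n+1}$ of subsets of $Z$ covering $Z$, each $r$-disjoint (points in different members of a family are at distance $\ge r$), with members of diameter $\le D$. *)

theory Defs
  imports "HOL-Analysis.Analysis" "HOL-Algebra.Generated_Groups"
begin

definition asdim_le :: "'a set \<Rightarrow> ('a \<Rightarrow> 'a \<Rightarrow> real) \<Rightarrow> nat \<Rightarrow> bool" where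
  "asdim_le Z d n \<longleftrightarrow>
    (\<forall>r>0. \<exists>D::real. \<exists>U :: nat \<Rightarrow> 'a set set.
       (\<forall>i\<le>n. \<forall>A\<in>U i. A \<subseteq> Z) \<and>
       Z \<subseteq> (\<Union>i\<le>n. \<Union>(U i)) \<and>
       (\<forall>i\<le>n. \<forall>A\<in>U i. \<forall>B\<in>U i. A \<noteq> B \<longrightarrow> (\<forall>x\<in>A. \<forall>y\<in>B. r \<le> d x y)) \<and>
       (\<forall>i\<le>n. \<forall>A\<in>U i. \<forall>x\<in>A. \<forall>y\<in>A. d x y \<le> D))"

definition left_invariant_metric :: "('a, 'b) monoid_scheme \<Rightarrow> ('a \<Rightarrow> 'a \<Rightarrow> real) \<Rightarrow> bool" where
  "left_invariant_metric G d \<longleftrightarrow> Metric_space (carrier G) d \<and>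
     (\<forall>g\<in>carrier G. \<forall>x\<in>carrier G. \<forall>y\<in>carrier G. d (g \<otimes>\<^bsub>G\<^esub> x) (g \<otimes>\<^bsub>G\<^esub> y) = d x y)"

end

theory Submission
  imports Defs "HOL-Algebra.Left_Coset"
begin

text \<open>Fix \<open>r > 0\<close> and let \<open>H\<close> be the subgroup generated by the open \<open>r\<close>-ball around \<open>\<one>\<close>.
  By left invariance \<open>d x y = d \<one> (x\<inverse> y)\<close>, so points at distance \<open>< r\<close> lie in the same left coset
  of \<open>H\<close>: distinct cosets are \<open>r\<close>-separated. Left translation is an isometry, so translating
  one \<open>r\<close>-disjoint cover of \<open>H\<close> by \<open>n + 1\<close> uniformly bounded families to every coset and taking
  unions family by family gives such a cover of \<open>G\<close> with the same bound \<open>D\<close>.\<close>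

definition r_separated :: "('a \<Rightarrow> 'a \<Rightarrow> real) \<Rightarrow> real \<Rightarrow> 'a set \<Rightarrow> 'a set \<Rightarrow> bool" where
  "r_separated d r A B \<longleftrightarrow> (\<forall>x\<in>A. \<forall>y\<in>B. r \<le> d x y)"

definition asdim_cover ::
    "'a set \<Rightarrow> ('a \<Rightarrow> 'a \<Rightarrow> real) \<Rightarrow> nat \<Rightarrow> real \<Rightarrow> real \<Rightarrow> (nat \<Rightarrow> 'a set set) \<Rightarrow> bool" where
  "asdim_cover Z d n r D U \<longleftrightarrow>
    (\<forall>i\<le>n. \<forall>A\<in>U i. A \<subseteq> Z) \<and>
    Z \<subseteq> (\<Union>i\<le>n. \<Union>(U i)) \<and>
    (\<forall>i\<le>n. \<forall>A\<in>U i. \<forall>B\<in>U i. A \<noteq> B \<longrightarrow> r_separated d r A B) \<and>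
    (\<forall>i\<le>n. \<forall>A\<in>U i. \<forall>x\<in>A. \<forall>y\<in>A. d x y \<le> D)"

lemma asdim_coverI:
  assumes "\<And>i A. i \<le> n \<Longrightarrow> A \<in> U i \<Longrightarrow> A \<subseteq> Z"
    and "Z \<subseteq> (\<Union>i\<le>n. \<Union>(U i))"
    and "\<And>i A B. i \<le> n \<Longrightarrow> A \<in> U i \<Longrightarrow> B \<in> U i \<Longrightarrow> A \<noteq> B \<Longrightarrow> r_separated d r A B"
    and "\<And>i A x y. i \<le> n \<Longrightarrow> A \<in> U i \<Longrightarrow> x \<in> A \<Longrightarrow> y \<in> A \<Longrightarrow> d x y \<le> D"
  shows "asdim_cover Z d n r D U"
  using assms unfolding asdim_cover_def by auto

lemma asdim_coverD:
  assumes "asdim_cover Z d n r D U" and "i \<le> n" and "A \<in> U i"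
  shows asdim_cover_subset: "A \<subseteq> Z"
    and asdim_cover_separated: "B \<in> U i \<Longrightarrow> A \<noteq> B \<Longrightarrow> r_separated d r A B"
    and asdim_cover_diameter: "x \<in> A \<Longrightarrow> y \<in> A \<Longrightarrow> d x y \<le> D"
  using assms unfolding asdim_cover_def by auto

lemma asdim_cover_covers:
  assumes "asdim_cover Z d n r D U" and "z \<in> Z"
  obtains i A where "i \<le> n" "A \<in> U i" "z \<in> A"
  using assms unfolding asdim_cover_def by auto

lemma asdim_le_iff_asdim_cover:
  "asdim_le Z d n \<longleftrightarrow> (\<forall>r>0. \<exists>D U. asdim_cover Z d n r D U)"
  by (simp add: asdim_le_def asdim_cover_def r_separated_def)

lemma asdim_cover_Union_separated:
  assumes covers: "\<And>C. C \<in> \<C> \<Longrightarrow> \<exists>U. asdim_cover C d n r D U"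
    and separated: "\<And>C C'. C \<in> \<C> \<Longrightarrow> C' \<in> \<C> \<Longrightarrow> C \<noteq> C' \<Longrightarrow> r_separated d r C C'"
  shows "\<exists>U. asdim_cover (\<Union>\<C>) d n r D U"
proof -
  have "\<forall>C\<in>\<C>. \<exists>U. asdim_cover C d n r D U"
    using covers by blast
  then obtain V where V: "\<And>C. C \<in> \<C> \<Longrightarrow> asdim_cover C d n r D (V C)"
    using bchoice by meson
  define W where "W i = (\<Union>C\<in>\<C>. V C i)" for i
  have "asdim_cover (\<Union>\<C>) d n r D W"
  proof (rule asdim_coverI)
    fix i A assume "i \<le> n" "A \<in> W i"
    then obtain C where "C \<in> \<C>" "A \<in> V C i" unfolding W_def by blast
    then show "A \<subseteq> \<Union>\<C>"
      using asdim_cover_subset[OF V \<open>i \<le> n\<close>] by blast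
    fix x y assume "x \<in> A" "y \<in> A"
    then show "d x y \<le> D"
      using asdim_cover_diameter[OF V[OF \<open>C \<in> \<C>\<close>] \<open>i \<le> n\<close> \<open>A \<in> V C i\<close>] by blast
  next
    fix i A B assume i: "i \<le> n" and A: "A \<in> W i"
      and B: "B \<in> W i" and "A \<noteq> B"
    then obtain C C' where C: "C \<in> \<C>" "A \<in> V C i" and C': "C' \<in> \<C>" "B \<in> V C' i"
      unfolding W_def by blast
    show "r_separated d r A B"
    proof (cases "C = C'")
      case True
      then show ?thesis
        using asdim_cover_separated[OF V[OF C(1)] i C(2)] C'(2) \<open>A \<noteq> B\<close> by blast
    next
      case False
      have "A \<subseteq> C" "B \<subseteq> C'"
        using asdim_cover_subset[OF V i] C C' by blast+
      then show ?thesis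
        using separated[OF C(1) C'(1) False] unfolding r_separated_def by blast
    qed
  next
    show "\<Union>\<C> \<subseteq> (\<Union>i\<le>n. \<Union>(W i))"
    proof
      fix z assume "z \<in> \<Union>\<C>"
      then obtain C where "C \<in> \<C>" "z \<in> C" by blast
      then obtain i A where "i \<le> n" "A \<in> V C i" "z \<in> A"
        using asdim_cover_covers[OF V] by metis
      with \<open>C \<in> \<C>\<close> show "z \<in> (\<Union>i\<le>n. \<Union>(W i))" unfolding W_def by blast
    qed
  qed
  then show ?thesis by auto
qed

lemma (in group) left_invariant_metric_one_inv_mult:
  assumes "left_invariant_metric G d" "x \<in> carrier G" "y \<in> carrier G"
  shows "d \<one> (inv x \<otimes> y) = d x y"
proof -
  have "d \<one> (inv x \<otimes> y) = d (inv x \<otimes> x) (inv x \<otimes> y)"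
    using assms(2) by simp
  also have "\<dots> = d x y"
    using assms inv_closed unfolding left_invariant_metric_def by blast
  finally show ?thesis .
qed

lemma (in group) asdim_cover_l_coset:
  assumes "left_invariant_metric G d" "g \<in> carrier G" "Z \<subseteq> carrier G"
    and cover: "asdim_cover Z d n r D U"
  shows "asdim_cover (g <# Z) d n r D (\<lambda>i. (\<lambda>A. g <# A) ` U i)"
proof -
  have isometry: "d (g \<otimes> a) (g \<otimes> b) = d a b" if "a \<in> Z" "b \<in> Z" for a b
    using assms(1-3) that unfolding left_invariant_metric_def by blast
  show ?thesis
  proof (rule asdim_coverI)
    fix i A' assume i: "i \<le> n" and "A' \<in> (\<lambda>A. g <# A) ` U i"
    then obtain A where A: "A \<in> U i" "A' = g <# A" by blast
    have "A \<subseteq> Z"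
      using asdim_cover_subset[OF cover i A(1)] .
    then show "A' \<subseteq> g <# Z"
      using A(2) unfolding l_coset_def by blast
    fix x y assume "x \<in> A'" "y \<in> A'"
    then obtain a b where ab: "a \<in> A" "b \<in> A" and "x = g \<otimes> a" "y = g \<otimes> b"
      using A(2) unfolding l_coset_def by blast
    then have "d x y = d a b"
      using isometry \<open>A \<subseteq> Z\<close> by blast
    then show "d x y \<le> D"
      using asdim_cover_diameter[OF cover i A(1) ab] by simp
  next
    fix i A' B' assume i: "i \<le> n" and "A' \<in> (\<lambda>A. g <# A) ` U i"
      and "B' \<in> (\<lambda>A. g <# A) ` U i" and "A' \<noteq> B'"
    then obtain A B where A: "A \<in> U i" "A' = g <# A" and B: "B \<in> U i" "B' = g <# B"
      and "A \<noteq> B" by blast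
    have "A \<subseteq> Z" "B \<subseteq> Z"
      using asdim_cover_subset[OF cover i] A(1) B(1) by auto
    show "r_separated d r A' B'"
      unfolding r_separated_def
    proof (intro ballI)
      fix x y assume "x \<in> A'" "y \<in> B'"
      then obtain a b where ab: "a \<in> A" "b \<in> B" and "x = g \<otimes> a" "y = g \<otimes> b"
        using A(2) B(2) unfolding l_coset_def by blast
      then have "d x y = d a b"
        using isometry \<open>A \<subseteq> Z\<close> \<open>B \<subseteq> Z\<close> by blast
      then show "r \<le> d x y"
        using asdim_cover_separated[OF cover i A(1) B(1) \<open>A \<noteq> B\<close>] ab
        unfolding r_separated_def by simp
    qed
  next
    show "g <# Z \<subseteq> (\<Union>i\<le>n. \<Union>((\<lambda>A. g <# A) ` U i))"
    proof
      fix x assume "x \<in> g <# Z"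
      then obtain z where "z \<in> Z" "x = g \<otimes> z"
        unfolding l_coset_def by blast
      moreover obtain i A where "i \<le> n" "A \<in> U i" "z \<in> A"
        using asdim_cover_covers[OF cover \<open>z \<in> Z\<close>] .
      ultimately show "x \<in> (\<Union>i\<le>n. \<Union>((\<lambda>A. g <# A) ` U i))"
        unfolding l_coset_def by blast
    qed
  qed
qed

lemma (in group) lcosets_r_separated:
  assumes "left_invariant_metric G d" "subgroup H G" "{g \<in> carrier G. d \<one> g < r} \<subseteq> H"
    and "C \<in> lcosets H" "C' \<in> lcosets H" "C \<noteq> C'"
  shows "r_separated d r C C'"
  unfolding r_separated_def
proof (intro ballI)
  fix x y assume "x \<in> C" "y \<in> C'"
  obtain a b where a: "a \<in> carrier G" "C = a <# H" and b: "b \<in> carrier G" "C' = b <# H"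
    using assms(4,5) unfolding LCOSETS_def by blast
  have x: "x \<in> carrier G" "C = x <# H"
    using \<open>x \<in> C\<close> a l_coset_carrier l_repr_independence assms(2) by blast+
  have y: "y \<in> carrier G" "C' = y <# H"
    using \<open>y \<in> C'\<close> b l_coset_carrier l_repr_independence assms(2) by blast+
  show "r \<le> d x y"
  proof (rule ccontr)
    assume "\<not> r \<le> d x y"
    then have "inv x \<otimes> y \<in> H"
      using assms(3) left_invariant_metric_one_inv_mult[OF assms(1) x(1) y(1)] x(1) y(1) by auto
    then have "y \<in> x <# H"
      using subgroup.lcos_module_rev[OF assms(2) is_group x(1) y(1)] by blast
    then have "C = C'"
      using l_repr_independence[OF _ x(1) assms(2)] x(2) y(2) by blast
    with assms(6) show False ..
  qed
qed

lemma (in group) asdim_cover_carrier_if_asdim_cover_subgroup: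
  assumes "left_invariant_metric G d" "subgroup H G" "{g \<in> carrier G. d \<one> g < r} \<subseteq> H"
    and cover: "asdim_cover H d n r D U"
  shows "\<exists>U. asdim_cover (carrier G) d n r D U"
proof -
  have "\<exists>U. asdim_cover (\<Union>(lcosets H)) d n r D U"
  proof (rule asdim_cover_Union_separated)
    fix C assume "C \<in> lcosets H"
    then obtain g where "g \<in> carrier G" "C = g <# H"
      unfolding LCOSETS_def by blast
    then show "\<exists>U. asdim_cover C d n r D U"
      using asdim_cover_l_coset[OF assms(1) _ subgroup.subset[OF assms(2)] cover] by blast
  qed (rule lcosets_r_separated[OF assms(1-3)])
  then show ?thesis
    using lcosets_part_G[OF assms(2)] by simp
qed

theorem mainTheorem11:
  fixes G :: "('a, 'b) monoid_scheme" and d :: "'a \<Rightarrow> 'a \<Rightarrow> real" and n :: nat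
  assumes "group G"
    and "left_invariant_metric G d"
    and "\<And>r. r > 0 \<Longrightarrow>
           asdim_le (generate G {g \<in> carrier G. d \<one>\<^bsub>G\<^esub> g < r}) d n"
  shows "asdim_le (carrier G) d n"
  unfolding asdim_le_iff_asdim_cover
proof (intro allI impI)
  fix r :: real assume "r > 0"
  let ?ball = "{g \<in> carrier G. d \<one>\<^bsub>G\<^esub> g < r}"
  have subgroup: "subgroup (generate G ?ball) G"
    using group.generate_is_subgroup[OF assms(1)] by auto
  have ball: "?ball \<subseteq> generate G ?ball"
    by (auto intro: generate.incl)
  obtain D U where "asdim_cover (generate G ?ball) d n r D U"
    using assms(3) \<open>r > 0\<close> unfolding asdim_le_iff_asdim_cover by blast
  then show "\<exists>D U. asdim_cover (carrier G) d n r D U"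
    using group.asdim_cover_carrier_if_asdim_cover_subgroup[OF assms(1,2) subgroup ball] by blast
qed

end
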